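(* For programs $\Omega_1,\Omega_2$ with weight constraints, $\Omega_1$ is strongly equivalent to $\Omega_2$ (as programs with weight constraints) if and only if $[\Omega_1]$ is strongly equivalent to $[\Omega_2]$ (as programs with nested expressions).
   Context: Programs with nested expressions. A literal is a propositional atom $a$ or its classical negation $\neg a$; a set of literals is consistent if it contains no pair $a,\neg a$. Elementary formulas are literals, $\bot$, $\top$. Formulas are built with $\mathit{not}$, "," (conjunction) and ";" (disjunction). A rule is $\mathit{Head}\leftarrow\mathit{Body}$ with formulas; a program is a set of rules. For consistent $Z$: $Z\models l$ iff $l\in Z$; $Z\models\top$; $Z\not\models\bot$; $Z\models(F,G)$ iff both; $Z\models(F;G)$ iff at least one; $Z\models\mathit{not}\,F$ iff $Z\not\models F$; $Z$ satisfies a program if $Z\models\mathit{Body}$ implies $Z\models\mathit{Head}$ for every rule. Reduct: $F^Z=F$ for elementary $F$, commutes with "," and ";", $(\mathit{not}\,F)^Z=\bot$ if $Z\models F$, $\top$ otherwise; $\Pi^Z$ applies this to heads and bodies. $Z$ is an answer set of a $\mathit{not}$-free program if it is a minimal consistent set satisfying it, and of $\Pi$ if it is an answer set of $\Pi^Z$. Programs $\Pi_1,\Pi_2$ with nested expressions are strongly equivalent if for every program $\Pi$ with nested expressions, $\Pi_1\cup\Pi$ and $\Pi_2\cup\Pi$ have the same answer sets. $\langle F_1,\dots,F_n\rangle:X$ is the disjunction over $I\in X$ of the conjunctions of $F_i$, $i\in I$ (empty conjunction $\top$, empty disjunction $\bot$). Programs with weight constraints. A rule element is a literal $l$ (positive)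 or $\mathit{not}\,l$ (negative). A weight constraint is $L\le\{c_1=w_1,\dots,c_m=w_m\}\le U$ ($L,U$ reals or $\pm\infty$, $w_i\ge0$ reals). A rule is $C_0\leftarrow C_1,\dots,C_n$ with weight constraints; the rule elements of $C_0$ are its head elements; a program is a set of rules; a literal $c$ is identified with $1\le\{c=1\}$. $Z$ satisfies a constraint if $L\le\sum_{j:Z\models c_j}w_j\le U$, and a program if every rule whose body constraints are all satisfied has its head satisfied. $(L\le S)^Z=L^Z\le S'$, where $S'$ drops negative pairs and $L^Z$ is $L$ minus the sum of weights of negative pairs $c=w$ with $Z\models c$. The reduct of $L_0\le S_0\le U_0\leftarrow L_1\le S_1\le U_1,\dots,L_n\le S_n\le U_n$ is, if $Z\models S_i\le U_i$ for all $i\ge1$, the rules $l\leftarrow(L_1\le S_1)^Z,\dots,(L_n\le S_n)^Z$ for the positive head elements $l\in Z$; otherwise empty. $\Omega^Z$ is the union; $\mathit{cl}(\Omega^Z)$ is its unique minimal satisfying set of literals. $Z$ is an answer set of $\Omega$ if $Z\models\Omega$ and $\mathit{cl}(\Omega^Z)=Z$. $\Omega_1,\Omega_2$ are strongly equivalent if for every program $\Omega$ with weight constraints, $\Omega_1\cup\Omega$ and $\Omega_2\cup\Omega$ have the same answer sets. Translation: $[w\le S]=\langle c_1,\dots,c_m\rangle:\{I: w\le\sum_{i\in I}w_i\}$, $[w<S]=\langle c_1,\dots,c_m\rangle:\{I: w<\sum_{i\in I}w_i\}$, $[S\le U]=\mathit{not}\,[U<S]$, $[L\le S\le U]=[L\le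 S],[S\le U]$; $[\Omega]$ replaces each rule $C_0\leftarrow C_1,\dots,C_n$ by $(l_1;\mathit{not}\,l_1),\dots,(l_p;\mathit{not}\,l_p),[C_0]\leftarrow[C_1],\dots,[C_n]$, $l_1,\dots,l_p$ the positive head elements. *)

theory Defs
  imports Complex_Main "HOL-Library.Extended_Real"
begin

datatype 'a lit = Pos 'a | Neg 'a   \<comment> \<open>atom a, classical negation \<not>a\<close>

definition consistent :: "'a lit set \<Rightarrow> bool" where
  "consistent Z \<longleftrightarrow> (\<forall>a. \<not> (Pos a \<in> Z \<and> Neg a \<in> Z))"

datatype 'a form =
    FLit "'a lit" | FBot | FTop | FNot "'a form"
  | FConj "'a form" "'a form" | FDisj "'a form" "'a form"

type_synonym 'a nrule = "'a form \<times> 'a form"   \<comment> \<open>(Head, Body)\<close>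
type_synonym 'a nprog = "'a nrule set"

fun fsat :: "'a lit set \<Rightarrow> 'a form \<Rightarrow> bool" where
  "fsat Z (FLit l) = (l \<in> Z)"
| "fsat Z FBot = False"
| "fsat Z FTop = True"
| "fsat Z (FNot F) = (\<not> fsat Z F)"
| "fsat Z (FConj F G) = (fsat Z F \<and> fsat Z G)"
| "fsat Z (FDisj F G) = (fsat Z F \<or> fsat Z G)"

definition nsat :: "'a lit set \<Rightarrow> 'a nprog \<Rightarrow> bool" where
  "nsat Z \<Pi> \<longleftrightarrow> (\<forall>(H, B) \<in> \<Pi>. fsat Z B \<longrightarrow> fsat Z H)"

fun freduct :: "'a form \<Rightarrow> 'a lit set \<Rightarrow> 'a form" where
  "freduct (FLit l) Z = FLit l"
| "freduct FBot Z = FBot"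
| "freduct FTop Z = FTop"
| "freduct (FNot F) Z = (if fsat Z F then FBot else FTop)"
| "freduct (FConj F G) Z = FConj (freduct F Z) (freduct G Z)"
| "freduct (FDisj F G) Z = FDisj (freduct F Z) (freduct G Z)"

definition nreduct :: "'a nprog \<Rightarrow> 'a lit set \<Rightarrow> 'a nprog" where
  "nreduct \<Pi> Z = (\<lambda>(H, B). (freduct H Z, freduct B Z)) ` \<Pi>"

fun not_free :: "'a form \<Rightarrow> bool" where
  "not_free (FNot F) = False"
| "not_free (FConj F G) = (not_free F \<and> not_free G)"
| "not_free (FDisj F G) = (not_free F \<and> not_free G)"
| "not_free _ = True"

definition nf_answer_set :: "'a nprog \<Rightarrow> 'a lit set \<Rightarrow> bool" where
  "nf_answer_set \<Pi> Z \<longleftrightarrow> consistent Z \<and> nsat Z \<Pi> \<and>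
     (\<forall>Y. consistent Y \<and> nsat Y \<Pi> \<and> Y \<subseteq> Z \<longrightarrow> Y = Z)"

definition n_answer_set :: "'a nprog \<Rightarrow> 'a lit set \<Rightarrow> bool" where
  "n_answer_set \<Pi> Z \<longleftrightarrow> nf_answer_set (nreduct \<Pi> Z) Z"

definition n_strongly_equiv :: "'a nprog \<Rightarrow> 'a nprog \<Rightarrow> bool" where
  "n_strongly_equiv \<Pi>1 \<Pi>2 \<longleftrightarrow>
     (\<forall>\<Pi>. \<forall>Z. n_answer_set (\<Pi>1 \<union> \<Pi>) Z \<longleftrightarrow> n_answer_set (\<Pi>2 \<union> \<Pi>) Z)"

datatype 'a elem = PosE "'a lit" | NotE "'a lit"   \<comment> \<open>l  or  not l\<close>

record 'a wc =
  lower :: ereal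
  elems :: "('a elem \<times> real) list"
  upper :: ereal

type_synonym 'a wrule = "'a wc \<times> 'a wc list"   \<comment> \<open>(C0, [C1,...,Cn])\<close>
type_synonym 'a wprog = "'a wrule set"

fun esat :: "'a lit set \<Rightarrow> 'a elem \<Rightarrow> bool" where
  "esat Z (PosE l) = (l \<in> Z)"
| "esat Z (NotE l) = (l \<notin> Z)"

definition wsum :: "'a lit set \<Rightarrow> 'a wc \<Rightarrow> real" where
  "wsum Z C = sum_list (map (\<lambda>(c, w). if esat Z c then w else 0) (elems C))"

definition wcsat :: "'a lit set \<Rightarrow> 'a wc \<Rightarrow> bool" where
  "wcsat Z C \<longleftrightarrow> lower C \<le> ereal (wsum Z C) \<and> ereal (wsum Z C) \<le> upper C"

definition wsat :: "'a lit set \<Rightarrow> 'a wprog \<Rightarrow> bool" where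
  "wsat Z \<Omega> \<longleftrightarrow> (\<forall>(C0, Bs) \<in> \<Omega>. (\<forall>C \<in> set Bs. wcsat Z C) \<longrightarrow> wcsat Z C0)"

definition wc_wf :: "'a wc \<Rightarrow> bool" where
  "wc_wf C \<longleftrightarrow> (\<forall>(c, w) \<in> set (elems C). 0 \<le> w)"

definition wprog_wf :: "'a wprog \<Rightarrow> bool" where
  "wprog_wf \<Omega> \<longleftrightarrow> (\<forall>(C0, Bs) \<in> \<Omega>. wc_wf C0 \<and> (\<forall>C \<in> set Bs. wc_wf C))"

fun is_pos :: "'a elem \<Rightarrow> bool" where
  "is_pos (PosE l) = True" | "is_pos (NotE l) = False"

definition pos_lits :: "'a wc \<Rightarrow> 'a lit list" where
  "pos_lits C = [l. (PosE l, w) \<leftarrow> elems C]"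

definition lit_wc :: "'a lit \<Rightarrow> 'a wc" where
  "lit_wc l = \<lparr>lower = 1, elems = [(PosE l, 1)], upper = \<infinity>\<rparr>"

text \<open>(L \<le> S)^Z = L^Z \<le> S', represented with upper bound \<infinity>.\<close>
definition lower_reduct :: "'a wc \<Rightarrow> 'a lit set \<Rightarrow> 'a wc" where
  "lower_reduct C Z =
     \<lparr>lower = lower C - ereal (sum_list (map (\<lambda>(c, w). if \<not> is_pos c \<and> esat Z c then w else 0) (elems C))),
      elems = filter (\<lambda>(c, w). is_pos c) (elems C),
      upper = \<infinity>\<rparr>"

definition wrule_reduct :: "'a wrule \<Rightarrow> 'a lit set \<Rightarrow> 'a wprog" where
  "wrule_reduct r Z =
     (if (\<forall>C \<in> set (snd r). ereal (wsum Z C) \<le> upper C)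
      then {(lit_wc l, map (\<lambda>C. lower_reduct C Z) (snd r)) | l. l \<in> set (pos_lits (fst r)) \<and> l \<in> Z}
      else {})"

definition wreduct :: "'a wprog \<Rightarrow> 'a lit set \<Rightarrow> 'a wprog" where
  "wreduct \<Omega> Z = (\<Union>r \<in> \<Omega>. wrule_reduct r Z)"

definition cl :: "'a wprog \<Rightarrow> 'a lit set" where
  "cl \<Omega> = (THE X. wsat X \<Omega> \<and> (\<forall>Y. wsat Y \<Omega> \<longrightarrow> X \<subseteq> Y))"

definition w_answer_set :: "'a wprog \<Rightarrow> 'a lit set \<Rightarrow> bool" where
  "w_answer_set \<Omega> Z \<longleftrightarrow> consistent Z \<and> wsat Z \<Omega> \<and> cl (wreduct \<Omega> Z) = Z"

definition w_strongly_equiv :: "'a wprog \<Rightarrow> 'a wprog \<Rightarrow> bool" where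
  "w_strongly_equiv \<Omega>1 \<Omega>2 \<longleftrightarrow>
     (\<forall>\<Omega>. wprog_wf \<Omega> \<longrightarrow> (\<forall>Z. w_answer_set (\<Omega>1 \<union> \<Omega>) Z \<longleftrightarrow> w_answer_set (\<Omega>2 \<union> \<Omega>) Z))"

fun conj_list :: "'a form list \<Rightarrow> 'a form" where
  "conj_list [] = FTop"
| "conj_list [F] = F"
| "conj_list (F # Fs) = FConj F (conj_list Fs)"

fun disj_list :: "'a form list \<Rightarrow> 'a form" where
  "disj_list [] = FBot"
| "disj_list [F] = F"
| "disj_list (F # Fs) = FDisj F (disj_list Fs)"

fun elem_form :: "'a elem \<Rightarrow> 'a form" where
  "elem_form (PosE l) = FLit l"
| "elem_form (NotE l) = FNot (FLit l)"

text \<open>\<langle>F_1,...,F_m\<rangle>:X with X given by a predicate on subsets I of {0..<m}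
  (each subset enumerated once, as a strictly increasing index list).\<close>
definition angle :: "'a form list \<Rightarrow> (nat list \<Rightarrow> bool) \<Rightarrow> 'a form" where
  "angle Fs P = disj_list (map (\<lambda>I. conj_list (map (\<lambda>i. Fs ! i) I))
                                 (filter P (subseqs [0..<length Fs])))"

definition isum :: "('a elem \<times> real) list \<Rightarrow> nat list \<Rightarrow> real" where
  "isum cs I = sum_list (map (\<lambda>i. snd (cs ! i)) I)"

definition tr_ge :: "ereal \<Rightarrow> ('a elem \<times> real) list \<Rightarrow> 'a form" where
  "tr_ge w cs = angle (map (elem_form \<circ> fst) cs) (\<lambda>I. w \<le> ereal (isum cs I))"

definition tr_gt :: "ereal \<Rightarrow> ('a elem \<times> real) list \<Rightarrow> 'a form" where
  "tr_gt w cs = angle (map (elem_form \<circ> fst) cs) (\<lambda>I. w < ereal (isum cs I))"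

definition tr_wc :: "'a wc \<Rightarrow> 'a form" where
  "tr_wc C = FConj (tr_ge (lower C) (elems C)) (FNot (tr_gt (upper C) (elems C)))"

definition tr_rule :: "'a wrule \<Rightarrow> 'a nrule" where
  "tr_rule r =
     (conj_list (map (\<lambda>l. FDisj (FLit l) (FNot (FLit l))) (pos_lits (fst r)) @ [tr_wc (fst r)]),
      conj_list (map tr_wc (snd r)))"

definition tr_prog :: "'a wprog \<Rightarrow> 'a nprog" where
  "tr_prog \<Omega> = tr_rule ` \<Omega>"

end

(*
  Both answer set semantics are governed by here-and-there (SE) models: pairs Y \<subseteq> Z with Z
  consistent, Z a model of the program and Y a model of its reduct relative to Z.  Z is an answer
  set iff (Z, Z) is an SE-model and no (Y, Z) with Y \<noteq> Z is; for weight constraint programs this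
  uses that reducts have literal heads and monotone bodies, so that cl is their least model.

  The translation preserves SE-models.  Since weights are nonnegative, the disjunction [L \<le> S]
  over index sets holds iff the total weight of the satisfied elements reaches L, and its reduct
  relative to Z counts positive elements in Y and negative ones in Z, as the reduct of L \<le> S does.
  In a translated head the disjunctions l ; not l reduce to l for the positive head literals
  l \<in> Z, which are exactly the heads of the weight constraint reduct.

  SE-models of a union are the common SE-models, so equal SE-models give strong equivalence; this
  settles one direction once strongly equivalent weight constraint programs are shown to have the
  same SE-models.  Adding the facts Z makes Z an answer set iff (Z, Z) is an SE-model; adding the
  facts Y and all rules l \<leftarrow> l' with l, l' \<in> Z - Y makes Z an answer set iff moreover (Y, Z) is
  not.  The other direction holds because [\<Omega>] has the same answer sets as \<Omega> and commutes with
  unions.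
*)

theory Submission
  imports Defs "HOL-Library.Sublist"
begin

lemma fsat_conj_list [simp]: "fsat Z (conj_list Fs) \<longleftrightarrow> (\<forall>F\<in>set Fs. fsat Z F)"
  by (induction Fs rule: conj_list.induct) auto

lemma fsat_disj_list [simp]: "fsat Z (disj_list Fs) \<longleftrightarrow> (\<exists>F\<in>set Fs. fsat Z F)"
  by (induction Fs rule: disj_list.induct) auto

lemma freduct_conj_list [simp]: "freduct (conj_list Fs) Z = conj_list (map (\<lambda>F. freduct F Z) Fs)"
  by (induction Fs rule: conj_list.induct) auto

lemma freduct_disj_list [simp]: "freduct (disj_list Fs) Z = disj_list (map (\<lambda>F. freduct F Z) Fs)"
  by (induction Fs rule: disj_list.induct) auto

lemma fsat_freduct_self: "fsat Z (freduct F Z) \<longleftrightarrow> fsat Z F"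
  by (induction F) auto

lemma subseqs_upt_subset:
  assumes "I \<in> set (subseqs [0..<n])"
  shows "set I \<subseteq> {..<n}"
proof -
  have "set I \<in> set ` set (subseqs [0..<n])" using assms by blast
  then show ?thesis unfolding subseqs_powset by auto
qed

lemma fsat_angle:
  "fsat Y (angle Fs P) \<longleftrightarrow>
    (\<exists>I\<in>set (subseqs [0..<length Fs]). P I \<and> (\<forall>i\<in>set I. fsat Y (Fs ! i)))"
  by (auto simp: angle_def)

lemma freduct_angle: "freduct (angle Fs P) Z = angle (map (\<lambda>F. freduct F Z) Fs) P"
proof -
  have "conj_list (map (\<lambda>i. freduct (Fs ! i) Z) I) =
      conj_list (map ((!) (map (\<lambda>F. freduct F Z) Fs)) I)"
    if "I \<in> set (subseqs [0..<length Fs])" for I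
    using subseqs_upt_subset[OF that] by (auto intro!: arg_cong[where f=conj_list] simp: subset_iff)
  then show ?thesis
    unfolding angle_def by (auto simp: comp_def intro!: arg_cong[where f=disj_list])
qed

definition weight_sum :: "('b \<Rightarrow> bool) \<Rightarrow> ('b \<times> real) list \<Rightarrow> real" where
  "weight_sum g cs = sum_list (map (\<lambda>(c, w). if g c then w else 0) cs)"

lemma weight_sum_Nil [simp]: "weight_sum g [] = 0"
  by (simp add: weight_sum_def)

lemma weight_sum_Cons [simp]:
  "weight_sum g (p # cs) = (if g (fst p) then snd p else 0) + weight_sum g cs"
  by (simp add: weight_sum_def split: prod.split)

lemma weight_sum_split:
  "weight_sum g cs = weight_sum (\<lambda>c. P c \<and> g c) cs + weight_sum (\<lambda>c. \<not> P c \<and> g c) cs"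
  by (induction cs) auto

lemma weight_sum_filter:
  "weight_sum g (filter (\<lambda>(c, w). P c) cs) = weight_sum (\<lambda>c. P c \<and> g c) cs"
  by (induction cs) auto

lemma weight_sum_mono:
  assumes "\<forall>(c, w)\<in>set cs. 0 \<le> w" and "\<And>c. g c \<Longrightarrow> h c"
  shows "weight_sum g cs \<le> weight_sum h cs"
  using assms by (induction cs) (auto simp: add_mono)

lemma weight_sum_cong:
  "(\<And>c w. (c, w) \<in> set cs \<Longrightarrow> g c = h c) \<Longrightarrow> weight_sum g cs = weight_sum h cs"
  by (induction cs) fastforce+

lemma weight_sum_eq_sum_indices:
  "weight_sum g cs = (\<Sum>i | i < length cs \<and> g (fst (cs ! i)). snd (cs ! i))"
proof -
  have "weight_sum g cs = (\<Sum>i<length cs. if g (fst (cs ! i)) then snd (cs ! i) else 0)"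
    by (simp add: weight_sum_def sum_list_sum_nth atLeast0LessThan case_prod_beta)
  also have "\<dots> = (\<Sum>i | i < length cs \<and> g (fst (cs ! i)). snd (cs ! i))"
    by (simp add: sum.If_cases Collect_conj_eq lessThan_def Int_commute)
  finally show ?thesis .
qed

lemma isum_eq_sum: "distinct I \<Longrightarrow> isum cs I = (\<Sum>i\<in>set I. snd (cs ! i))"
  by (simp add: isum_def sum_list_distinct_conv_sum_set)

text \<open>With nonnegative weights the set of all satisfied indices is the best witness.\<close>
lemma ex_subseq_weight_iff:
  assumes nonneg: "\<forall>(c, w)\<in>set cs. 0 \<le> w"
    and upward: "\<And>a b. Q a \<Longrightarrow> a \<le> b \<Longrightarrow> Q b"
  shows "(\<exists>I\<in>set (subseqs [0..<length cs]). Q (isum cs I) \<and> (\<forall>i\<in>set I. g (fst (cs ! i))))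
         \<longleftrightarrow> Q (weight_sum g cs)"
proof
  let ?S = "{i. i < length cs \<and> g (fst (cs ! i))}"
  assume "\<exists>I\<in>set (subseqs [0..<length cs]). Q (isum cs I) \<and> (\<forall>i\<in>set I. g (fst (cs ! i)))"
  then obtain I where I: "I \<in> set (subseqs [0..<length cs])" "Q (isum cs I)"
    and sat: "\<forall>i\<in>set I. g (fst (cs ! i))" by blast
  have "isum cs I = (\<Sum>i\<in>set I. snd (cs ! i))"
    using subseqs_distinctD[OF I(1)] by (simp add: isum_eq_sum)
  also have "\<dots> \<le> (\<Sum>i\<in>?S. snd (cs ! i))"
  proof (rule sum_mono2)
    show "set I \<subseteq> ?S" using subseqs_upt_subset[OF I(1)] sat by auto
    show "0 \<le> snd (cs ! i)" if "i \<in> ?S - set I" for i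
    proof -
      have "cs ! i \<in> set cs" using that by simp
      with nonneg show ?thesis by (auto simp: case_prod_beta)
    qed
  qed simp
  also have "\<dots> = weight_sum g cs" by (simp add: weight_sum_eq_sum_indices)
  finally show "Q (weight_sum g cs)" using upward I(2) by blast
next
  assume "Q (weight_sum g cs)"
  define I where "I = filter (\<lambda>i. g (fst (cs ! i))) [0..<length cs]"
  have "isum cs I = weight_sum g cs"
    by (simp add: I_def isum_eq_sum weight_sum_eq_sum_indices Collect_conj_eq Int_commute)
  then show "\<exists>I\<in>set (subseqs [0..<length cs]). Q (isum cs I) \<and> (\<forall>i\<in>set I. g (fst (cs ! i)))"
    using \<open>Q (weight_sum g cs)\<close> by (intro bexI[of _ I]) (auto simp: I_def)
qed

lemma fsat_angle_weights:
  assumes "\<forall>(c, w)\<in>set cs. 0 \<le> w" and "\<And>a b. Q a \<Longrightarrow> a \<le> b \<Longrightarrow> Q b"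
  shows "fsat Y (angle (map (F \<circ> fst) cs) (\<lambda>I. Q (isum cs I))) \<longleftrightarrow>
    Q (weight_sum (\<lambda>c. fsat Y (F c)) cs)"
proof -
  have "(\<forall>i\<in>set I. fsat Y (map (F \<circ> fst) cs ! i)) \<longleftrightarrow> (\<forall>i\<in>set I. fsat Y (F (fst (cs ! i))))"
    if "I \<in> set (subseqs [0..<length cs])" for I
    using subseqs_upt_subset[OF that] by (auto simp: subset_iff)
  then have "fsat Y (angle (map (F \<circ> fst) cs) (\<lambda>I. Q (isum cs I))) \<longleftrightarrow>
      (\<exists>I\<in>set (subseqs [0..<length cs]). Q (isum cs I) \<and> (\<forall>i\<in>set I. fsat Y (F (fst (cs ! i)))))"
    unfolding fsat_angle length_map by (intro bex_cong refl) simp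
  also have "\<dots> \<longleftrightarrow> Q (weight_sum (\<lambda>c. fsat Y (F c)) cs)"
    by (rule ex_subseq_weight_iff[OF assms])
  finally show ?thesis .
qed

section \<open>Weight constraints and their reducts\<close>

lemma wsum_eq_weight_sum: "wsum Z C = weight_sum (esat Z) (elems C)"
  by (simp add: wsum_def weight_sum_def)

definition pos_weight :: "'a lit set \<Rightarrow> ('a elem \<times> real) list \<Rightarrow> real" where
  "pos_weight Y cs = weight_sum (\<lambda>c. is_pos c \<and> esat Y c) cs"

definition neg_weight :: "'a lit set \<Rightarrow> ('a elem \<times> real) list \<Rightarrow> real" where
  "neg_weight Z cs = weight_sum (\<lambda>c. \<not> is_pos c \<and> esat Z c) cs"

lemma wsum_eq_pos_neg_weight: "wsum Z C = pos_weight Z (elems C) + neg_weight Z (elems C)"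
  unfolding pos_weight_def neg_weight_def wsum_eq_weight_sum by (rule weight_sum_split)

lemma wsum_lower_reduct: "wsum Y (lower_reduct C Z) = pos_weight Y (elems C)"
  using weight_sum_filter[where P=is_pos and g="esat Y"]
  by (simp add: wsum_def weight_sum_def pos_weight_def lower_reduct_def)

lemma wcsat_lower_reduct:
  "wcsat Y (lower_reduct C Z) \<longleftrightarrow> lower C \<le> ereal (pos_weight Y (elems C) + neg_weight Z (elems C))"
proof -
  have "lower (lower_reduct C Z) = lower C - ereal (neg_weight Z (elems C))"
    by (simp add: lower_reduct_def neg_weight_def weight_sum_def)
  moreover have "upper (lower_reduct C Z) = \<infinity>"
    by (simp add: lower_reduct_def)
  ultimately show ?thesis
    unfolding wcsat_def wsum_lower_reduct by (cases "lower C") (simp_all add: algebra_simps)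
qed

lemma wcsat_lower_reduct_mono:
  assumes "wc_wf C" "X \<subseteq> X'" "wcsat X (lower_reduct C Z)"
  shows "wcsat X' (lower_reduct C Z)"
proof -
  have "pos_weight X (elems C) \<le> pos_weight X' (elems C)"
    using assms(1,2) unfolding pos_weight_def wc_wf_def
    by (intro weight_sum_mono) (auto elim!: is_pos.elims)
  then show ?thesis
    using assms(3) unfolding wcsat_lower_reduct by (auto intro: order_trans)
qed

lemma wcsat_of_lower_reduct:
  assumes "wc_wf C" "Y \<subseteq> Z" "wcsat Y (lower_reduct C Z)" "ereal (wsum Z C) \<le> upper C"
  shows "wcsat Z C"
proof -
  have "wcsat Z (lower_reduct C Z)" using wcsat_lower_reduct_mono assms(1-3) .
  then have "lower C \<le> ereal (wsum Z C)"
    unfolding wcsat_lower_reduct wsum_eq_pos_neg_weight .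
  then show ?thesis using assms(4) by (simp add: wcsat_def)
qed

lemma pos_weight_eq_if_pos_lits:
  assumes "\<forall>l\<in>set (pos_lits C). l \<in> Z \<longrightarrow> l \<in> Y" "Y \<subseteq> Z"
  shows "pos_weight Y (elems C) = pos_weight Z (elems C)"
  unfolding pos_weight_def
proof (rule weight_sum_cong)
  fix c w assume "(c, w) \<in> set (elems C)"
  with assms show "(is_pos c \<and> esat Y c) = (is_pos c \<and> esat Z c)"
    by (cases c) (auto simp: pos_lits_def)
qed

lemma wcsat_lit_wc [simp]: "wcsat Y (lit_wc l) \<longleftrightarrow> l \<in> Y"
  by (simp add: wcsat_def wsum_def lit_wc_def)

lemma upper_lit_wc [simp]: "upper (lit_wc l) = \<infinity>"
  by (simp add: lit_wc_def)

lemma pos_lits_lit_wc [simp]: "pos_lits (lit_wc l) = [l]"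
  by (simp add: pos_lits_def lit_wc_def)

lemma wcsat_lower_reduct_lit_wc [simp]: "wcsat Y (lower_reduct (lit_wc l) Z) \<longleftrightarrow> l \<in> Y"
  by (simp add: wcsat_lower_reduct lit_wc_def pos_weight_def neg_weight_def)

section \<open>The translation\<close>

lemma fsat_elem_form [simp]: "fsat Y (elem_form c) \<longleftrightarrow> esat Y c"
  by (cases c) auto

lemma fsat_freduct_elem_form:
  "fsat Y (freduct (elem_form c) Z) \<longleftrightarrow> (if is_pos c then esat Y c else esat Z c)"
  by (cases c) auto

lemma fsat_tr_ge:
  assumes "\<forall>(c, w)\<in>set cs. 0 \<le> w"
  shows "fsat Y (tr_ge L cs) \<longleftrightarrow> L \<le> ereal (weight_sum (esat Y) cs)"
proof -
  have "fsat Y (tr_ge L cs) \<longleftrightarrow> L \<le> ereal (weight_sum (\<lambda>c. fsat Y (elem_form c)) cs)"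
    unfolding tr_ge_def
    by (rule fsat_angle_weights[OF assms, where Q="\<lambda>x. L \<le> ereal x"]) (auto intro: order_trans)
  then show ?thesis by simp
qed

lemma fsat_tr_gt:
  assumes "\<forall>(c, w)\<in>set cs. 0 \<le> w"
  shows "fsat Y (tr_gt U cs) \<longleftrightarrow> U < ereal (weight_sum (esat Y) cs)"
proof -
  have "fsat Y (tr_gt U cs) \<longleftrightarrow> U < ereal (weight_sum (\<lambda>c. fsat Y (elem_form c)) cs)"
    unfolding tr_gt_def
    by (rule fsat_angle_weights[OF assms, where Q="\<lambda>x. U < ereal x"]) (auto intro: less_le_trans)
  then show ?thesis by simp
qed

lemma fsat_freduct_tr_ge:
  assumes "\<forall>(c, w)\<in>set cs. 0 \<le> w"
  shows "fsat Y (freduct (tr_ge L cs) Z) \<longleftrightarrow> L \<le> ereal (pos_weight Y cs + neg_weight Z cs)"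
proof -
  have "weight_sum (\<lambda>c. fsat Y (freduct (elem_form c) Z)) cs = pos_weight Y cs + neg_weight Z cs"
    unfolding pos_weight_def neg_weight_def
    by (subst weight_sum_split[where P=is_pos]) (simp add: fsat_freduct_elem_form cong: conj_cong)
  moreover have "fsat Y (freduct (tr_ge L cs) Z) \<longleftrightarrow>
      L \<le> ereal (weight_sum (\<lambda>c. fsat Y (freduct (elem_form c) Z)) cs)"
    using fsat_angle_weights[OF assms, where Q="\<lambda>x. L \<le> ereal x"
        and F="\<lambda>c. freduct (elem_form c) Z"]
    by (simp add: tr_ge_def freduct_angle comp_def) (meson order_trans ereal_less_eq(3))
  ultimately show ?thesis by simp
qed

lemma fsat_tr_wc:
  assumes "wc_wf C"
  shows "fsat Z (tr_wc C) \<longleftrightarrow> wcsat Z C"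
  using assms unfolding wc_wf_def
  by (simp add: tr_wc_def wcsat_def fsat_tr_ge fsat_tr_gt wsum_eq_weight_sum not_less)

lemma fsat_freduct_tr_wc:
  assumes "wc_wf C"
  shows "fsat Y (freduct (tr_wc C) Z) \<longleftrightarrow> ereal (wsum Z C) \<le> upper C \<and> wcsat Y (lower_reduct C Z)"
  using assms unfolding wc_wf_def
  by (auto simp: tr_wc_def fsat_freduct_tr_ge fsat_tr_gt wcsat_lower_reduct wsum_eq_weight_sum
      not_less)

lemma tr_rule_head_sat:
  "wc_wf C0 \<Longrightarrow> fsat Z (fst (tr_rule (C0, Bs))) \<longleftrightarrow> wcsat Z C0"
  by (simp add: tr_rule_def fsat_tr_wc)

lemma tr_rule_body_sat:
  "\<forall>C\<in>set Bs. wc_wf C \<Longrightarrow> fsat Z (snd (tr_rule (C0, Bs))) \<longleftrightarrow> (\<forall>C\<in>set Bs. wcsat Z C)"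
  by (simp add: tr_rule_def fsat_tr_wc)

lemma tr_rule_head_reduct_sat:
  "wc_wf C0 \<Longrightarrow> fsat Y (freduct (fst (tr_rule (C0, Bs))) Z) \<longleftrightarrow>
     (\<forall>l\<in>set (pos_lits C0). l \<in> Z \<longrightarrow> l \<in> Y) \<and>
     ereal (wsum Z C0) \<le> upper C0 \<and> wcsat Y (lower_reduct C0 Z)"
  by (auto simp: tr_rule_def fsat_freduct_tr_wc)

lemma tr_rule_body_reduct_sat:
  "\<forall>C\<in>set Bs. wc_wf C \<Longrightarrow> fsat Y (freduct (snd (tr_rule (C0, Bs))) Z) \<longleftrightarrow>
     (\<forall>C\<in>set Bs. ereal (wsum Z C) \<le> upper C \<and> wcsat Y (lower_reduct C Z))"
  by (simp add: tr_rule_def fsat_freduct_tr_wc)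

lemma wrule_reduct_eq_image:
  "wrule_reduct (C0, Bs) Z =
    (if \<forall>C\<in>set Bs. ereal (wsum Z C) \<le> upper C
     then (\<lambda>l. (lit_wc l, map (\<lambda>C. lower_reduct C Z) Bs)) ` {l \<in> set (pos_lits C0). l \<in> Z}
     else {})"
  by (auto simp: wrule_reduct_def)

lemma wsat_wrule_reduct:
  "wsat Y (wrule_reduct (C0, Bs) Z) \<longleftrightarrow>
    ((\<forall>C\<in>set Bs. ereal (wsum Z C) \<le> upper C \<and> wcsat Y (lower_reduct C Z)) \<longrightarrow>
     (\<forall>l\<in>set (pos_lits C0). l \<in> Z \<longrightarrow> l \<in> Y))"
  by (auto simp: wsat_def wrule_reduct_eq_image)

text \<open>The head disjunctions \<open>l ; not l\<close> of the translation reduce to \<open>l\<close> for the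
  positive head literals \<open>l \<in> Z\<close>, which gives the rules of the weight constraint reduct; the
  remaining conjuncts of the translated head follow from \<open>Z\<close> satisfying the rule.\<close>
lemma wsat_wrule_reduct_iff_tr_rule:
  assumes wf: "wc_wf C0" "\<forall>C\<in>set Bs. wc_wf C" and "Y \<subseteq> Z"
    and Z_sat: "(\<forall>C\<in>set Bs. wcsat Z C) \<longrightarrow> wcsat Z C0"
  shows "wsat Y (wrule_reduct (C0, Bs) Z) \<longleftrightarrow>
    (fsat Y (freduct (snd (tr_rule (C0, Bs))) Z) \<longrightarrow> fsat Y (freduct (fst (tr_rule (C0, Bs))) Z))"
  unfolding wsat_wrule_reduct tr_rule_body_reduct_sat[OF wf(2)] tr_rule_head_reduct_sat[OF wf(1)]
proof (intro iffI impI conjI)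
  assume head_if_body: "(\<forall>C\<in>set Bs. ereal (wsum Z C) \<le> upper C \<and> wcsat Y (lower_reduct C Z)) \<longrightarrow>
      (\<forall>l\<in>set (pos_lits C0). l \<in> Z \<longrightarrow> l \<in> Y)"
    and body: "\<forall>C\<in>set Bs. ereal (wsum Z C) \<le> upper C \<and> wcsat Y (lower_reduct C Z)"
  show head: "\<forall>l\<in>set (pos_lits C0). l \<in> Z \<longrightarrow> l \<in> Y"
    using body head_if_body by blast
  have "\<forall>C\<in>set Bs. wcsat Z C"
    using body wf(2) \<open>Y \<subseteq> Z\<close> wcsat_of_lower_reduct by blast
  then have "wcsat Z C0" using Z_sat by blast
  then show "ereal (wsum Z C0) \<le> upper C0" by (simp add: wcsat_def)
  have "pos_weight Y (elems C0) = pos_weight Z (elems C0)"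
    using pos_weight_eq_if_pos_lits[OF head \<open>Y \<subseteq> Z\<close>] .
  moreover have "lower C0 \<le> ereal (wsum Z C0)" using \<open>wcsat Z C0\<close> by (simp add: wcsat_def)
  ultimately show "wcsat Y (lower_reduct C0 Z)"
    unfolding wcsat_lower_reduct by (simp add: wsum_eq_pos_neg_weight)
qed auto

lemma nsat_image: "nsat Z (f ` A) \<longleftrightarrow> (\<forall>r\<in>A. fsat Z (snd (f r)) \<longrightarrow> fsat Z (fst (f r)))"
  by (auto simp: nsat_def case_prod_beta)

lemma nsat_tr_prog:
  assumes "wprog_wf \<Omega>"
  shows "nsat Z (tr_prog \<Omega>) \<longleftrightarrow> wsat Z \<Omega>"
  using assms unfolding tr_prog_def nsat_image wsat_def wprog_wf_def
  by (intro ball_cong refl) (auto simp: tr_rule_head_sat tr_rule_body_sat)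

lemma nsat_nreduct_tr_prog:
  assumes "wprog_wf \<Omega>" "Y \<subseteq> Z" "wsat Z \<Omega>"
  shows "nsat Y (nreduct (tr_prog \<Omega>) Z) \<longleftrightarrow> wsat Y (wreduct \<Omega> Z)"
proof -
  have "nsat Y (nreduct (tr_prog \<Omega>) Z) \<longleftrightarrow>
      (\<forall>r\<in>\<Omega>. fsat Y (freduct (snd (tr_rule r)) Z) \<longrightarrow> fsat Y (freduct (fst (tr_rule r)) Z))"
    by (simp add: nreduct_def tr_prog_def image_image nsat_image case_prod_beta)
  also have "\<dots> \<longleftrightarrow> (\<forall>r\<in>\<Omega>. wsat Y (wrule_reduct r Z))"
  proof (rule ball_cong[OF refl])
    fix r assume "r \<in> \<Omega>"
    moreover obtain C0 Bs where r: "r = (C0, Bs)" by fastforce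
    ultimately have "wc_wf C0" "\<forall>C\<in>set Bs. wc_wf C" "(\<forall>C\<in>set Bs. wcsat Z C) \<longrightarrow> wcsat Z C0"
      using assms(1,3) by (auto simp: wprog_wf_def wsat_def)
    then show "(fsat Y (freduct (snd (tr_rule r)) Z) \<longrightarrow> fsat Y (freduct (fst (tr_rule r)) Z)) \<longleftrightarrow>
        wsat Y (wrule_reduct r Z)"
      unfolding r using wsat_wrule_reduct_iff_tr_rule assms(2) by blast
  qed
  also have "\<dots> \<longleftrightarrow> wsat Y (wreduct \<Omega> Z)"
    by (auto simp: wsat_def wreduct_def)
  finally show ?thesis .
qed

section \<open>Least models of reducts\<close>

text \<open>Rules with literal heads and monotone bodies have a least model, so the definite
  description in \<open>cl\<close> is meaningful for reducts.\<close>
lemma wsat_Inter_models: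
  assumes lit_heads: "\<And>H Ds. (H, Ds) \<in> R \<Longrightarrow> \<exists>l. H = lit_wc l"
    and mono_bodies: "\<And>H Ds D X X'. (H, Ds) \<in> R \<Longrightarrow> D \<in> set Ds \<Longrightarrow> X \<subseteq> X' \<Longrightarrow> wcsat X D \<Longrightarrow> wcsat X' D"
  shows "wsat (\<Inter>{X. wsat X R}) R"
  unfolding wsat_def[of "\<Inter>{X. wsat X R}"]
proof clarify
  fix H Ds assume rule: "(H, Ds) \<in> R" and body: "\<forall>D\<in>set Ds. wcsat (\<Inter>{X. wsat X R}) D"
  obtain l where H: "H = lit_wc l" using lit_heads[OF rule] by blast
  have "l \<in> X" if model: "wsat X R" for X
  proof -
    have "\<Inter>{X. wsat X R} \<subseteq> X" using model by blast
    then have "\<forall>D\<in>set Ds. wcsat X D"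
      using body mono_bodies[OF rule] by blast
    then show ?thesis using model rule unfolding wsat_def H by fastforce
  qed
  then show "wcsat (\<Inter>{X. wsat X R}) H" by (simp add: H)
qed

lemma cl_eq_iff:
  assumes "wsat (\<Inter>{X. wsat X R}) R"
  shows "cl R = Z \<longleftrightarrow> wsat Z R \<and> (\<forall>Y. Y \<subseteq> Z \<and> wsat Y R \<longrightarrow> Y = Z)"
proof -
  have least: "\<Inter>{X. wsat X R} \<subseteq> Y" if "wsat Y R" for Y
    using that by blast
  have "cl R = \<Inter>{X. wsat X R}"
    unfolding cl_def by (rule the_equality) (use assms least in blast)+
  then show ?thesis
    using assms least by (metis subset_antisym)
qed

lemma wsat_Inter_models_wreduct:
  assumes "wprog_wf \<Omega>"
  shows "wsat (\<Inter>{X. wsat X (wreduct \<Omega> Z)}) (wreduct \<Omega> Z)"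
proof (rule wsat_Inter_models)
  fix H Ds assume "(H, Ds) \<in> wreduct \<Omega> Z"
  then obtain C0 Bs where "(C0, Bs) \<in> \<Omega>" and rule: "(H, Ds) \<in> wrule_reduct (C0, Bs) Z"
    by (auto simp: wreduct_def)
  then have wf: "\<forall>C\<in>set Bs. wc_wf C" using assms by (auto simp: wprog_wf_def)
  from rule show "\<exists>l. H = lit_wc l"
    by (auto simp: wrule_reduct_eq_image split: if_splits)
  fix D X X' assume "D \<in> set Ds" "X \<subseteq> X'" "wcsat X D"
  moreover obtain C where "C \<in> set Bs" "D = lower_reduct C Z"
    using rule \<open>D \<in> set Ds\<close> by (auto simp: wrule_reduct_eq_image split: if_splits)
  ultimately show "wcsat X' D"
    using wf wcsat_lower_reduct_mono by blast
qed

section \<open>Here-and-there models\<close>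

lemma wsat_Un: "wsat Z (\<Omega>1 \<union> \<Omega>2) \<longleftrightarrow> wsat Z \<Omega>1 \<and> wsat Z \<Omega>2"
  unfolding wsat_def by blast

lemma wreduct_Un: "wreduct (\<Omega>1 \<union> \<Omega>2) Z = wreduct \<Omega>1 Z \<union> wreduct \<Omega>2 Z"
  by (simp add: wreduct_def)

lemma wsat_wreduct: "wsat W (wreduct \<Omega> Z) \<longleftrightarrow> (\<forall>r\<in>\<Omega>. wsat W (wrule_reduct r Z))"
  by (auto simp: wsat_def wreduct_def)

lemma nsat_Un: "nsat Z (\<Pi>1 \<union> \<Pi>2) \<longleftrightarrow> nsat Z \<Pi>1 \<and> nsat Z \<Pi>2"
  unfolding nsat_def by blast

lemma wprog_wf_Un: "wprog_wf (\<Omega>1 \<union> \<Omega>2) \<longleftrightarrow> wprog_wf \<Omega>1 \<and> wprog_wf \<Omega>2"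
  unfolding wprog_wf_def by blast

lemma tr_prog_Un: "tr_prog (\<Omega>1 \<union> \<Omega>2) = tr_prog \<Omega>1 \<union> tr_prog \<Omega>2"
  by (simp add: tr_prog_def image_Un)

lemma wsat_wreduct_self: "wsat Z (wreduct \<Omega> Z)"
  by (auto simp: wsat_def wreduct_def wrule_reduct_def)

lemma nsat_nreduct_self: "nsat Z (nreduct \<Pi> Z) \<longleftrightarrow> nsat Z \<Pi>"
  by (auto simp: nsat_def nreduct_def fsat_freduct_self)

lemma consistent_subset: "consistent Z \<Longrightarrow> Y \<subseteq> Z \<Longrightarrow> consistent Y"
  by (auto simp: consistent_def)

text \<open>SE-models in the sense of Turner.\<close>
definition w_ht_model :: "'a wprog \<Rightarrow> 'a lit set \<Rightarrow> 'a lit set \<Rightarrow> bool" where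
  "w_ht_model \<Omega> Y Z \<longleftrightarrow> Y \<subseteq> Z \<and> consistent Z \<and> wsat Z \<Omega> \<and> wsat Y (wreduct \<Omega> Z)"

definition n_ht_model :: "'a nprog \<Rightarrow> 'a lit set \<Rightarrow> 'a lit set \<Rightarrow> bool" where
  "n_ht_model \<Pi> Y Z \<longleftrightarrow> Y \<subseteq> Z \<and> consistent Z \<and> nsat Z \<Pi> \<and> nsat Y (nreduct \<Pi> Z)"

lemma w_ht_model_consistent: "w_ht_model \<Omega> Y Z \<Longrightarrow> consistent Z"
  by (simp add: w_ht_model_def)

lemma w_ht_model_self: "w_ht_model \<Omega> Y Z \<Longrightarrow> w_ht_model \<Omega> Z Z"
  by (simp add: w_ht_model_def wsat_wreduct_self)

lemma w_answer_set_iff_ht_models: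
  assumes "wprog_wf \<Omega>"
  shows "w_answer_set \<Omega> Z \<longleftrightarrow> w_ht_model \<Omega> Z Z \<and> (\<forall>Y. w_ht_model \<Omega> Y Z \<longrightarrow> Y = Z)"
  unfolding w_answer_set_def cl_eq_iff[OF wsat_Inter_models_wreduct[OF assms]] w_ht_model_def
  by auto

lemma n_answer_set_iff_ht_models:
  "n_answer_set \<Pi> Z \<longleftrightarrow> n_ht_model \<Pi> Z Z \<and> (\<forall>Y. n_ht_model \<Pi> Y Z \<longrightarrow> Y = Z)"
  unfolding n_answer_set_def nf_answer_set_def n_ht_model_def nsat_nreduct_self
  by (auto intro: consistent_subset)

lemma w_ht_model_Un: "w_ht_model (\<Omega>1 \<union> \<Omega>2) Y Z \<longleftrightarrow> w_ht_model \<Omega>1 Y Z \<and> w_ht_model \<Omega>2 Y Z"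
  by (auto simp: w_ht_model_def wsat_Un wreduct_Un)

lemma n_ht_model_Un: "n_ht_model (\<Pi>1 \<union> \<Pi>2) Y Z \<longleftrightarrow> n_ht_model \<Pi>1 Y Z \<and> n_ht_model \<Pi>2 Y Z"
  by (auto simp: n_ht_model_def nsat_Un nreduct_def image_Un)

lemma w_ht_model_iff_tr_prog:
  "wprog_wf \<Omega> \<Longrightarrow> w_ht_model \<Omega> Y Z \<longleftrightarrow> n_ht_model (tr_prog \<Omega>) Y Z"
  unfolding w_ht_model_def n_ht_model_def using nsat_tr_prog nsat_nreduct_tr_prog by blast

lemma w_answer_set_iff_tr_prog:
  "wprog_wf \<Omega> \<Longrightarrow> w_answer_set \<Omega> Z \<longleftrightarrow> n_answer_set (tr_prog \<Omega>) Z"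
  by (simp add: w_answer_set_iff_ht_models n_answer_set_iff_ht_models w_ht_model_iff_tr_prog)

lemma n_strongly_equiv_if_ht_models_eq:
  "n_ht_model \<Pi>1 = n_ht_model \<Pi>2 \<Longrightarrow> n_strongly_equiv \<Pi>1 \<Pi>2"
  by (simp add: n_strongly_equiv_def n_answer_set_iff_ht_models n_ht_model_Un)

section \<open>Programs separating here-and-there models\<close>

definition facts :: "'a lit set \<Rightarrow> 'a wprog" where
  "facts X = (\<lambda>l. (lit_wc l, [])) ` X"

definition all_or_none :: "'a lit set \<Rightarrow> 'a wprog" where
  "all_or_none X = (\<lambda>(l, l'). (lit_wc l, [lit_wc l'])) ` (X \<times> X)"

definition gap_prog :: "'a lit set \<Rightarrow> 'a lit set \<Rightarrow> 'a wprog" where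
  "gap_prog Y Z = facts Y \<union> all_or_none (Z - Y)"

lemma wprog_wf_facts: "wprog_wf (facts X)"
  by (auto simp: wprog_wf_def facts_def wc_wf_def lit_wc_def)

lemma wprog_wf_all_or_none: "wprog_wf (all_or_none X)"
  by (auto simp: wprog_wf_def all_or_none_def wc_wf_def lit_wc_def)

lemma wprog_wf_gap_prog: "wprog_wf (gap_prog Y Z)"
  by (simp add: gap_prog_def wprog_wf_Un wprog_wf_facts wprog_wf_all_or_none)

lemma wsat_facts: "wsat Z (facts X) \<longleftrightarrow> X \<subseteq> Z"
  by (auto simp: wsat_def facts_def)

lemma wsat_wreduct_facts: "wsat W (wreduct (facts X) Z) \<longleftrightarrow> X \<inter> Z \<subseteq> W"
  by (auto simp: wsat_wreduct facts_def wsat_wrule_reduct)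

lemma wsat_all_or_none: "X \<subseteq> Z \<Longrightarrow> wsat Z (all_or_none X)"
  by (auto simp: wsat_def all_or_none_def)

lemma wsat_wreduct_all_or_none:
  "X \<subseteq> Z \<Longrightarrow> wsat W (wreduct (all_or_none X) Z) \<longleftrightarrow> (X \<inter> W \<noteq> {} \<longrightarrow> X \<subseteq> W)"
  by (auto simp: wsat_wreduct all_or_none_def wsat_wrule_reduct subset_iff)

lemma w_ht_model_facts: "w_ht_model (facts Z) W Z \<longleftrightarrow> W = Z \<and> consistent Z"
  by (auto simp: w_ht_model_def wsat_facts wsat_wreduct_facts)

lemma w_ht_model_gap_prog:
  assumes "Y \<subseteq> Z"
  shows "w_ht_model (gap_prog Y Z) W Z \<longleftrightarrow> consistent Z \<and> (W = Y \<or> W = Z)"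
  using assms unfolding gap_prog_def
  by (auto simp: w_ht_model_def wsat_Un wreduct_Un wsat_facts wsat_wreduct_facts
      wsat_all_or_none wsat_wreduct_all_or_none)

lemma w_answer_set_Un_facts:
  assumes "wprog_wf \<Omega>"
  shows "w_answer_set (\<Omega> \<union> facts Z) Z \<longleftrightarrow> w_ht_model \<Omega> Z Z"
  using assms
  by (auto simp: w_answer_set_iff_ht_models wprog_wf_Un wprog_wf_facts
      w_ht_model_Un w_ht_model_facts dest: w_ht_model_consistent)

lemma w_answer_set_Un_gap_prog:
  assumes "wprog_wf \<Omega>" and "Y \<subset> Z"
  shows "w_answer_set (\<Omega> \<union> gap_prog Y Z) Z \<longleftrightarrow>
    w_ht_model \<Omega> Z Z \<and> \<not> w_ht_model \<Omega> Y Z"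
  using assms
  by (auto simp: w_answer_set_iff_ht_models wprog_wf_Un wprog_wf_gap_prog
      w_ht_model_Un w_ht_model_gap_prog dest: w_ht_model_consistent)

lemma w_ht_models_eq_if_strongly_equiv:
  assumes wf: "wprog_wf \<Omega>1" "wprog_wf \<Omega>2" and se: "w_strongly_equiv \<Omega>1 \<Omega>2"
  shows "w_ht_model \<Omega>1 = w_ht_model \<Omega>2"
proof (intro ext)
  fix Y Z :: "'a lit set"
  have there: "w_ht_model \<Omega>1 Z Z \<longleftrightarrow> w_ht_model \<Omega>2 Z Z"
    using se wprog_wf_facts[of Z]
    by (simp add: w_strongly_equiv_def w_answer_set_Un_facts[OF wf(1), symmetric]
        w_answer_set_Un_facts[OF wf(2), symmetric])
  show "w_ht_model \<Omega>1 Y Z \<longleftrightarrow> w_ht_model \<Omega>2 Y Z"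
  proof (cases "Y \<subset> Z")
    case True
    from se wprog_wf_gap_prog[of Y Z] have "(w_ht_model \<Omega>1 Z Z \<and> \<not> w_ht_model \<Omega>1 Y Z) \<longleftrightarrow>
        (w_ht_model \<Omega>2 Z Z \<and> \<not> w_ht_model \<Omega>2 Y Z)"
      by (simp add: w_strongly_equiv_def w_answer_set_Un_gap_prog[OF wf(1) True, symmetric]
          w_answer_set_Un_gap_prog[OF wf(2) True, symmetric])
    with there show ?thesis using w_ht_model_self by blast
  next
    case False
    with there show ?thesis by (auto simp: w_ht_model_def)
  qed
qed

theorem proposition4:
  fixes \<Omega>1 \<Omega>2 :: "'a wprog"
  assumes "wprog_wf \<Omega>1" and "wprog_wf \<Omega>2"
  shows "w_strongly_equiv \<Omega>1 \<Omega>2 \<longleftrightarrow> n_strongly_equiv (tr_prog \<Omega>1) (tr_prog \<Omega>2)"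
proof
  assume "w_strongly_equiv \<Omega>1 \<Omega>2"
  with assms have "w_ht_model \<Omega>1 = w_ht_model \<Omega>2"
    by (rule w_ht_models_eq_if_strongly_equiv)
  then have "n_ht_model (tr_prog \<Omega>1) = n_ht_model (tr_prog \<Omega>2)"
    using w_ht_model_iff_tr_prog[OF assms(1)] w_ht_model_iff_tr_prog[OF assms(2)] by auto
  then show "n_strongly_equiv (tr_prog \<Omega>1) (tr_prog \<Omega>2)"
    by (rule n_strongly_equiv_if_ht_models_eq)
next
  assume se: "n_strongly_equiv (tr_prog \<Omega>1) (tr_prog \<Omega>2)"
  show "w_strongly_equiv \<Omega>1 \<Omega>2"
    unfolding w_strongly_equiv_def
  proof (intro allI impI)
    fix \<Omega> :: "'a wprog" and Z assume wf: "wprog_wf \<Omega>"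
    have "w_answer_set (\<Omega>1 \<union> \<Omega>) Z \<longleftrightarrow> n_answer_set (tr_prog \<Omega>1 \<union> tr_prog \<Omega>) Z"
      using assms(1) wf by (simp add: w_answer_set_iff_tr_prog wprog_wf_Un tr_prog_Un)
    also have "\<dots> \<longleftrightarrow> n_answer_set (tr_prog \<Omega>2 \<union> tr_prog \<Omega>) Z"
      using se by (simp add: n_strongly_equiv_def)
    also have "\<dots> \<longleftrightarrow> w_answer_set (\<Omega>2 \<union> \<Omega>) Z"
      using assms(2) wf by (simp add: w_answer_set_iff_tr_prog wprog_wf_Un tr_prog_Un)
    finally show "w_answer_set (\<Omega>1 \<union> \<Omega>) Z \<longleftrightarrow> w_answer_set (\<Omega>2 \<union> \<Omega>) Z" .
  qed
qed

end
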